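(* Let $\mathcal{R}$ be the universal $R$-matrix of $U_q(\mathfrak{su}_2)$, $\mu=q^{2H}$, and $Q=(q-q^{-1})^2FE+q^{2H+1}+q^{-2H-1}$. Then $$\mathrm{Tr}_1^{(1/2)}\big(\mathcal{R}_{21}\mathcal{R}_{31}\mathcal{R}_{13}\mathcal{R}_{12}(\mu\otimes1\otimes1)\big)=\Delta(Q),$$ where $\mathrm{Tr}_1^{(1/2)}$ means representing the first tensor factor in the spin-$1/2$ representation and tracing over it.
   Context: $q$ generic complex, $U_q(\mathfrak{su}_2)$ generated by $E,F,q^H$ with $q^HE=qEq^H$, $q^HF=q^{-1}Fq^H$, $[E,F]=[2H]_q$, $[x]_q=(q^x-q^{-x})/(q-q^{-1})$; coproduct $\Delta(E)=E\otimes q^{-H}+q^H\otimes E$, $\Delta(F)=F\otimes q^{-H}+q^H\otimes F$, $\Delta(q^H)=q^H\otimes q^H$. $\mathcal{R}=\sum_{k\ge0}\frac{(q-q^{-1})^k}{[k]_q!}q^{-k(k+1)/2}(F\otimes E)^k(q^{kH}\otimes q^{-kH})q^{2(H\otimes H)}=\mathcal{R}^\alpha\otimes\mathcal{R}_\alpha$; leg notation: $\mathcal{R}_{12}=\mathcal{R}^\alpha\otimes\mathcal{R}_\alpha\otimes1$, $\mathcal{R}_{13}=\mathcal{R}^\alpha\otimes1\otimes\mathcal{R}_\alpha$, $\mathcal{R}_{21}=\mathcal{R}_\alpha\otimes\mathcal{R}^\alpha\otimes1$, $\mathcal{R}_{31}=\mathcal{R}_\alpha\otimes1\otimes\mathcal{R}^\alpha$.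 Spin-$1/2$ representation: basis $|1/2,\pm1/2\rangle$ with $E|1/2,m\rangle=[1/2-m]_q|1/2,m+1\rangle$, $F|1/2,m\rangle=[1/2+m]_q|1/2,m-1\rangle$, $H|1/2,m\rangle=m|1/2,m\rangle$. Equalities are understood as operators on tensor products of finite-dimensional spin representations. *)

theory Defs
  imports Complex_Main
begin

text \<open>We fix h with q = exp h and put q^x := exp (x h) for real x
(this fixes the branch for the fractional powers q^(2 m1 m2) etc.).
A spin representation of spin j is described by its dimension n = 2j+1; its basis
vectors are indexed by i < n, the basis vector with index i having weight
m = i - (n-1)/2.  Operators on tensor products are given by their matrix
entries in the product basis.\<close>

definition qpow :: "complex \<Rightarrow> real \<Rightarrow> complex" where
  "qpow h x = exp (complex_of_real x * h)"

definition qnum :: "complex \<Rightarrow> real \<Rightarrow> complex" where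
  "qnum h x = (qpow h x - qpow h (-x)) / (qpow h 1 - qpow h (-1))"

definition qfact :: "complex \<Rightarrow> nat \<Rightarrow> complex" where
  "qfact h k = (\<Prod>i=1..k. qnum h (real i))"

definition wt :: "nat \<Rightarrow> nat \<Rightarrow> real" where
  "wt n i = real i - (real n - 1) / 2"

text \<open>single-site matrices: E|j,m> = [j-m]|j,m+1>, F|j,m> = [j+m]|j,m-1>
(for n = 2 this is exactly the given spin-1/2 representation)\<close>
definition spinE :: "complex \<Rightarrow> nat \<Rightarrow> nat \<Rightarrow> nat \<Rightarrow> complex" where
  "spinE h n i i' = (if i = Suc i' \<and> i < n then qnum h ((real n - 1) / 2 - wt n i') else 0)"

definition spinF :: "complex \<Rightarrow> nat \<Rightarrow> nat \<Rightarrow> nat \<Rightarrow> complex" where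
  "spinF h n i i' = (if Suc i = i' \<and> i' < n then qnum h ((real n - 1) / 2 + wt n i') else 0)"

definition spinqH :: "complex \<Rightarrow> real \<Rightarrow> nat \<Rightarrow> nat \<Rightarrow> nat \<Rightarrow> complex" where
  "spinqH h c n i i' = (if i = i' then qpow h (c * wt n i) else 0)"

definition mat_mult :: "nat \<Rightarrow> (nat \<Rightarrow> nat \<Rightarrow> complex) \<Rightarrow> (nat \<Rightarrow> nat \<Rightarrow> complex) \<Rightarrow> nat \<Rightarrow> nat \<Rightarrow> complex" where
  "mat_mult n A B i k = (\<Sum>j<n. A i j * B j k)"

primrec mat_pow :: "nat \<Rightarrow> (nat \<Rightarrow> nat \<Rightarrow> complex) \<Rightarrow> nat \<Rightarrow> nat \<Rightarrow> nat \<Rightarrow> complex" where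
  "mat_pow n A 0 = (\<lambda>i j. if i = j then 1 else 0)"
| "mat_pow n A (Suc k) = mat_mult n (mat_pow n A k) A"

text \<open>Universal R-matrix evaluated on V_na (x) V_nb:
 sum_k (q-q^-1)^k/[k]! q^(-k(k+1)/2) (F (x) E)^k (q^(kH) (x) q^(-kH)) q^(2 H(x)H).
 All terms with k >= na vanish (F^na = 0 on V_na), so the sum is truncated at na.\<close>
definition Rmat :: "complex \<Rightarrow> nat \<Rightarrow> nat \<Rightarrow> nat \<times> nat \<Rightarrow> nat \<times> nat \<Rightarrow> complex" where
  "Rmat h na nb x y = (case x of (xa, xb) \<Rightarrow> case y of (ya, yb) \<Rightarrow>
     (\<Sum>k<na. (qpow h 1 - qpow h (-1)) ^ k / qfact h k * qpow h (- (real k * (real k + 1) / 2))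
        * mat_pow na (spinF h na) k xa ya * mat_pow nb (spinE h nb) k xb yb
        * qpow h (real k * wt na ya - real k * wt nb yb)
        * qpow h (2 * wt na ya * wt nb yb)))"

type_synonym op3 = "nat \<times> nat \<times> nat \<Rightarrow> nat \<times> nat \<times> nat \<Rightarrow> complex"
type_synonym op2 = "nat \<times> nat \<Rightarrow> nat \<times> nat \<Rightarrow> complex"

definition delta :: "nat \<Rightarrow> nat \<Rightarrow> complex" where
  "delta a b = (if a = b then 1 else 0)"

definition R12 :: "complex \<Rightarrow> nat \<Rightarrow> nat \<Rightarrow> nat \<Rightarrow> op3" where
  "R12 h n1 n2 n3 x y = (case x of (x1, x2, x3) \<Rightarrow> case y of (y1, y2, y3) \<Rightarrow>
     Rmat h n1 n2 (x1, x2) (y1, y2) * delta x3 y3)"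

definition R13 :: "complex \<Rightarrow> nat \<Rightarrow> nat \<Rightarrow> nat \<Rightarrow> op3" where
  "R13 h n1 n2 n3 x y = (case x of (x1, x2, x3) \<Rightarrow> case y of (y1, y2, y3) \<Rightarrow>
     Rmat h n1 n3 (x1, x3) (y1, y3) * delta x2 y2)"

definition R21 :: "complex \<Rightarrow> nat \<Rightarrow> nat \<Rightarrow> nat \<Rightarrow> op3" where
  "R21 h n1 n2 n3 x y = (case x of (x1, x2, x3) \<Rightarrow> case y of (y1, y2, y3) \<Rightarrow>
     Rmat h n2 n1 (x2, x1) (y2, y1) * delta x3 y3)"

definition R31 :: "complex \<Rightarrow> nat \<Rightarrow> nat \<Rightarrow> nat \<Rightarrow> op3" where
  "R31 h n1 n2 n3 x y = (case x of (x1, x2, x3) \<Rightarrow> case y of (y1, y2, y3) \<Rightarrow>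
     Rmat h n3 n1 (x3, x1) (y3, y1) * delta x2 y2)"

definition mu1 :: "complex \<Rightarrow> nat \<Rightarrow> nat \<Rightarrow> nat \<Rightarrow> op3" where
  "mu1 h n1 n2 n3 x y = (if x = y then qpow h (2 * wt n1 (fst x)) else 0)"

definition mul3 :: "nat \<Rightarrow> nat \<Rightarrow> nat \<Rightarrow> op3 \<Rightarrow> op3 \<Rightarrow> op3" where
  "mul3 n1 n2 n3 A B x z = (\<Sum>y\<in>{..<n1} \<times> {..<n2} \<times> {..<n3}. A x y * B y z)"

definition ptrace1 :: "nat \<Rightarrow> op3 \<Rightarrow> op2" where
  "ptrace1 n1 M x y = (case x of (x2, x3) \<Rightarrow> case y of (y2, y3) \<Rightarrow>
     (\<Sum>i<n1. M (i, x2, x3) (i, y2, y3)))"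

definition mul2 :: "nat \<Rightarrow> nat \<Rightarrow> op2 \<Rightarrow> op2 \<Rightarrow> op2" where
  "mul2 n2 n3 A B x z = (\<Sum>y\<in>{..<n2} \<times> {..<n3}. A x y * B y z)"

definition kron :: "(nat \<Rightarrow> nat \<Rightarrow> complex) \<Rightarrow> (nat \<Rightarrow> nat \<Rightarrow> complex) \<Rightarrow> op2" where
  "kron A B x y = A (fst x) (fst y) * B (snd x) (snd y)"

definition DeltaE :: "complex \<Rightarrow> nat \<Rightarrow> nat \<Rightarrow> op2" where
  "DeltaE h n2 n3 x y = kron (spinE h n2) (spinqH h (-1) n3) x y + kron (spinqH h 1 n2) (spinE h n3) x y"

definition DeltaF :: "complex \<Rightarrow> nat \<Rightarrow> nat \<Rightarrow> op2" where
  "DeltaF h n2 n3 x y = kron (spinF h n2) (spinqH h (-1) n3) x y + kron (spinqH h 1 n2) (spinF h n3) x y"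

definition DeltaqH :: "complex \<Rightarrow> real \<Rightarrow> nat \<Rightarrow> nat \<Rightarrow> op2" where
  "DeltaqH h c n2 n3 = kron (spinqH h c n2) (spinqH h c n3)"

text \<open>Delta(Q) for Q = (q-q^-1)^2 F E + q^(2H+1) + q^(-2H-1), Delta an algebra map:
 Delta(q^(2H+1)) = q * Delta(q^H)^2, Delta(q^(-2H-1)) = q^-1 * Delta(q^(-H))^2.\<close>
definition DeltaQ :: "complex \<Rightarrow> nat \<Rightarrow> nat \<Rightarrow> op2" where
  "DeltaQ h n2 n3 x y =
     (qpow h 1 - qpow h (-1)) ^ 2 * mul2 n2 n3 (DeltaF h n2 n3) (DeltaE h n2 n3) x y
     + qpow h 1 * mul2 n2 n3 (DeltaqH h 1 n2 n3) (DeltaqH h 1 n2 n3) x y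
     + qpow h (-1) * mul2 n2 n3 (DeltaqH h (-1) n2 n3) (DeltaqH h (-1) n2 n3) x y"

end

theory Submission
  imports Defs
begin

(* In spin 1/2 the operators E and F square to zero, so with its first leg in spin 1/2 the
   R-matrix is linear in E or F: as a 2 x 2 block matrix over the other leg, R_1a is upper
   triangular with diagonal (q^-H_a, q^H_a) and corner c E_a, and R_a1 is lower triangular
   with corner c F_a, where c = (q - q^-1) q^(-1/2).  Hence R21 R31 is lower triangular with
   diagonal Delta(q^-H), Delta(q^H) and corner c Delta(F), while R13 R12 is upper triangular
   with the same diagonal and corner c Delta(E).  Tracing their product against
   mu = diag(q^-1, q) gives q^-1 Delta(q^-H)^2 + q Delta(q^H)^2 + q c^2 Delta(F) Delta(E),
   and q c^2 = (q - q^-1)^2, which is Delta(Q). *)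

lemma qpow_0 [simp]: "qpow h 0 = 1"
  by (simp add: qpow_def)

lemma qpow_add: "qpow h a * qpow h b = qpow h (a + b)"
  by (simp add: qpow_def exp_add[symmetric] distrib_right)

(* The Suc 0 variant is needed because simp rewrites the index 1 to Suc 0 inside pairs. *)
lemma wt_spin_half [simp]: "wt 2 0 = - 1 / 2" "wt 2 1 = 1 / 2" "wt 2 (Suc 0) = 1 / 2"
  by (simp_all add: wt_def)

(* Also true for q^2 = 1, where qnum h 1 = 0 because division by zero yields zero. *)
lemma qnum_1_cancel: "(qpow h 1 - qpow h (-1)) / qnum h 1 * qnum h 1 = qpow h 1 - qpow h (-1)"
  by (cases "qpow h 1 = qpow h (-1)") (simp_all add: qnum_def)

lemma mat_mult_delta_right:
  assumes "k < n"
  shows "mat_mult n A delta i k = A i k"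
proof -
  have "mat_mult n A delta i k = (\<Sum>j<n. if j = k then A i k else 0)"
    unfolding mat_mult_def delta_def by (rule sum.cong) auto
  with assms show ?thesis by simp
qed

lemma mat_mult_delta_left:
  assumes "i < n"
  shows "mat_mult n delta A i k = A i k"
proof -
  have "mat_mult n delta A i k = (\<Sum>j<n. if j = i then A i k else 0)"
    unfolding mat_mult_def delta_def by (rule sum.cong) auto
  with assms show ?thesis by simp
qed

lemma mat_pow_1:
  assumes "\<And>i j. A i j \<noteq> 0 \<Longrightarrow> i < n"
  shows "mat_pow n A 1 = A"
proof (intro ext)
  fix i j
  have "mat_pow n A 1 i j = (\<Sum>l<n. if l = i then A i j else 0)"
    unfolding One_nat_def mat_pow.simps mat_mult_def by (rule sum.cong) auto
  then show "mat_pow n A 1 i j = A i j"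
    using assms[of i j] by auto
qed

lemma mat_pow_eq_0_if_square_eq_0:
  assumes "\<And>i j. A i j \<noteq> 0 \<Longrightarrow> i < n" and "mat_mult n A A = (\<lambda>_ _. 0)" and "2 \<le> k"
  shows "mat_pow n A k = (\<lambda>_ _. 0)"
  using \<open>2 \<le> k\<close>
proof (induction k rule: dec_induct)
  case base
  show ?case
    using mat_pow_1[of A n, OF assms(1)] assms(2) by (simp add: numeral_2_eq_2)
next
  case (step k)
  then show ?case by (simp add: mat_mult_def)
qed

lemma kron_zero_left [simp]: "kron (\<lambda>_ _. 0) B = (\<lambda>_ _. 0)"
  by (intro ext) (simp add: kron_def)

lemma kron_zero_right [simp]: "kron A (\<lambda>_ _. 0) = (\<lambda>_ _. 0)"
  by (intro ext) (simp add: kron_def)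

lemma mul2_zero_left [simp]: "mul2 n2 n3 (\<lambda>_ _. 0) B = (\<lambda>_ _. 0)"
  by (intro ext) (simp add: mul2_def)

lemma mul2_zero_right [simp]: "mul2 n2 n3 A (\<lambda>_ _. 0) = (\<lambda>_ _. 0)"
  by (intro ext) (simp add: mul2_def)

lemma mul2_scale:
  "mul2 n2 n3 (\<lambda>x y. a * A x y) (\<lambda>x y. b * B x y) x z = a * b * mul2 n2 n3 A B x z"
  by (simp add: mul2_def sum_distrib_left mult_ac)

lemma mul2_cong:
  assumes "\<And>u v. u \<in> {..<n2} \<times> {..<n3} \<Longrightarrow> v \<in> {..<n2} \<times> {..<n3} \<Longrightarrow> A u v = A' u v"
    and "\<And>u v. u \<in> {..<n2} \<times> {..<n3} \<Longrightarrow> v \<in> {..<n2} \<times> {..<n3} \<Longrightarrow> B u v = B' u v"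
    and "x \<in> {..<n2} \<times> {..<n3}" "z \<in> {..<n2} \<times> {..<n3}"
  shows "mul2 n2 n3 A B x z = mul2 n2 n3 A' B' x z"
  unfolding mul2_def by (rule sum.cong) (use assms in auto)

lemma mul2_scalar_right:
  assumes "z \<in> {..<n2} \<times> {..<n3}"
  shows "mul2 n2 n3 A (\<lambda>x y. if x = y then c else 0) x z = c * A x z"
proof -
  have "mul2 n2 n3 A (\<lambda>x y. if x = y then c else 0) x z
      = (\<Sum>y\<in>{..<n2} \<times> {..<n3}. if y = z then c * A x z else 0)"
    unfolding mul2_def by (rule sum.cong) auto
  with assms show ?thesis by simp
qed

lemma mul2_kron: "mul2 n2 n3 (kron A B) (kron C D) = kron (mat_mult n2 A C) (mat_mult n3 B D)"
  unfolding mul2_def kron_def mat_mult_def sum_product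
  by (intro ext) (simp add: sum.cartesian_product split_def mult_ac)

lemma mul2_kron_delta:
  assumes "x \<in> {..<n2} \<times> {..<n3}" "y \<in> {..<n2} \<times> {..<n3}"
  shows "mul2 n2 n3 (kron A delta) (kron delta B) x y = kron A B x y"
    and "mul2 n2 n3 (kron delta B) (kron A delta) x y = kron A B x y"
  using assms
  by (auto simp: mul2_kron kron_def mat_mult_delta_left mat_mult_delta_right)

lemma mul3_assoc: "mul3 n1 n2 n3 (mul3 n1 n2 n3 A B) C = mul3 n1 n2 n3 A (mul3 n1 n2 n3 B C)"
proof (intro ext)
  fix x z
  show "mul3 n1 n2 n3 (mul3 n1 n2 n3 A B) C x z = mul3 n1 n2 n3 A (mul3 n1 n2 n3 B C) x z"
    unfolding mul3_def sum_distrib_left sum_distrib_right mult.assoc by (rule sum.swap)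
qed

definition block :: "op3 \<Rightarrow> nat \<Rightarrow> nat \<Rightarrow> op2" where
  "block A i k = (\<lambda>x y. A (i, fst x, snd x) (k, fst y, snd y))"

lemma block_mul3:
  "block (mul3 n1 n2 n3 A B) i k = (\<lambda>x z. \<Sum>j<n1. mul2 n2 n3 (block A i j) (block B j k) x z)"
  by (intro ext)
     (simp add: block_def mul3_def mul2_def sum.cartesian_product split_def)

lemma block_mul3_spin_half:
  "block (mul3 2 n2 n3 A B) i k =
    (\<lambda>x z. mul2 n2 n3 (block A i 0) (block B 0 k) x z + mul2 n2 n3 (block A i 1) (block B 1 k) x z)"
  by (simp add: block_mul3 numeral_2_eq_2)

lemma ptrace1_eq_sum_blocks: "ptrace1 n1 M x y = (\<Sum>i<n1. block M i i x y)"
  by (simp add: ptrace1_def block_def split: prod.splits)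

lemma block_mu1:
  "block (mu1 h n1 n2 n3) i k = (\<lambda>x y. if i = k \<and> x = y then qpow h (2 * wt n1 i) else 0)"
  by (intro ext) (auto simp: block_def mu1_def prod_eq_iff)

lemma ptrace1_lower_upper_mu1:
  assumes "block M 0 1 = (\<lambda>_ _. 0)" and "block N 1 0 = (\<lambda>_ _. 0)"
    and "y \<in> {..<n2} \<times> {..<n3}"
  shows "ptrace1 2 (mul3 2 n2 n3 (mul3 2 n2 n3 M N) (mu1 h 2 n2 n3)) x y =
      qpow h (-1) * mul2 n2 n3 (block M 0 0) (block N 0 0) x y
    + qpow h 1 * (mul2 n2 n3 (block M 1 0) (block N 0 1) x y
                  + mul2 n2 n3 (block M 1 1) (block N 1 1) x y)"
  unfolding ptrace1_eq_sum_blocks block_mul3_spin_half block_mu1 assms(1,2)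
  by (simp add: numeral_2_eq_2 wt_def mul2_scalar_right[OF assms(3)] algebra_simps)

lemma spinE_row_bound: "spinE h n i j \<noteq> 0 \<Longrightarrow> i < n"
  by (simp add: spinE_def split: if_splits)

lemma spinF_row_bound: "spinF h n i j \<noteq> 0 \<Longrightarrow> i < n"
  by (simp add: spinF_def split: if_splits)

lemma spin_half_E_square: "mat_mult 2 (spinE h 2) (spinE h 2) = (\<lambda>_ _. 0)"
  by (intro ext) (auto simp: mat_mult_def spinE_def numeral_2_eq_2 lessThan_Suc)

lemma spin_half_F_square: "mat_mult 2 (spinF h 2) (spinF h 2) = (\<lambda>_ _. 0)"
  by (intro ext) (auto simp: mat_mult_def spinF_def numeral_2_eq_2 lessThan_Suc)

lemma spin_half_F_0_1: "spinF h 2 0 1 = qnum h 1"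
  by (simp add: spinF_def wt_def)

lemma spin_half_E_1_0: "spinE h 2 1 0 = qnum h 1"
  by (simp add: spinE_def wt_def)

lemma Rmat_first_order:
  assumes "na \<ge> 1"
    and nilpotent: "\<And>k. 2 \<le> k \<Longrightarrow>
      mat_pow na (spinF h na) k xa ya * mat_pow nb (spinE h nb) k xb yb = 0"
  shows "Rmat h na nb (xa, xb) (ya, yb) =
      delta xa ya * delta xb yb * qpow h (2 * wt na ya * wt nb yb)
    + (qpow h 1 - qpow h (-1)) / qnum h 1 * qpow h (-1) * spinF h na xa ya * spinE h nb xb yb
      * qpow h (wt na ya - wt nb yb) * qpow h (2 * wt na ya * wt nb yb)"
proof -
  define t where "t k = (qpow h 1 - qpow h (-1)) ^ k / qfact h k
      * qpow h (- (real k * (real k + 1) / 2))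
      * mat_pow na (spinF h na) k xa ya * mat_pow nb (spinE h nb) k xb yb
      * qpow h (real k * wt na ya - real k * wt nb yb) * qpow h (2 * wt na ya * wt nb yb)" for k
  have F1: "mat_pow na (spinF h na) 1 = spinF h na"
    by (rule mat_pow_1) (rule spinF_row_bound)
  have E1: "mat_pow nb (spinE h nb) 1 = spinE h nb"
    by (rule mat_pow_1) (rule spinE_row_bound)
  have "Rmat h na nb (xa, xb) (ya, yb) = (\<Sum>k<na. t k)"
    by (simp add: Rmat_def t_def)
  also have "\<dots> = (\<Sum>k<2. t k)"
  proof (cases "na = 1")
    case True
    then have "spinF h na xa ya = 0"
      by (auto simp: spinF_def)
    then have "t 1 = 0"
      unfolding t_def F1 by simp
    with True show ?thesis
      by (simp add: numeral_2_eq_2)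
  next
    case False
    with assms(1) have "{..<2} \<subseteq> {..<na}" by auto
    moreover have "t k = 0" if "2 \<le> k" for k
      using nilpotent[OF that] by (simp add: t_def)
    ultimately show ?thesis
      by (intro sum.mono_neutral_right) auto
  qed
  also have "\<dots> = t 0 + t 1"
    by (simp add: numeral_2_eq_2)
  also have "t 0 = delta xa ya * delta xb yb * qpow h (2 * wt na ya * wt nb yb)"
    by (simp add: t_def qfact_def delta_def)
  also have "t 1 = (qpow h 1 - qpow h (-1)) / qnum h 1 * qpow h (-1) * spinF h na xa ya
      * spinE h nb xb yb * qpow h (wt na ya - wt nb yb) * qpow h (2 * wt na ya * wt nb yb)"
    unfolding t_def F1 E1 by (simp add: qfact_def)
  finally show ?thesis .
qed

lemma Rmat_spin_half_left:
  "Rmat h 2 n (xa, xb) (ya, yb) =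
      delta xa ya * delta xb yb * qpow h (2 * wt 2 ya * wt n yb)
    + (qpow h 1 - qpow h (-1)) / qnum h 1 * qpow h (-1) * spinF h 2 xa ya * spinE h n xb yb
      * qpow h (wt 2 ya - wt n yb) * qpow h (2 * wt 2 ya * wt n yb)"
  by (rule Rmat_first_order)
     (simp_all add: mat_pow_eq_0_if_square_eq_0 spinF_row_bound spin_half_F_square)

lemma Rmat_spin_half_right:
  assumes "n \<ge> 1"
  shows "Rmat h n 2 (xa, xb) (ya, yb) =
      delta xa ya * delta xb yb * qpow h (2 * wt n ya * wt 2 yb)
    + (qpow h 1 - qpow h (-1)) / qnum h 1 * qpow h (-1) * spinF h n xa ya * spinE h 2 xb yb
      * qpow h (wt n ya - wt 2 yb) * qpow h (2 * wt n ya * wt 2 yb)"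
  by (rule Rmat_first_order[OF assms])
     (simp add: mat_pow_eq_0_if_square_eq_0 spinE_row_bound spin_half_E_square)

definition rcoeff :: "complex \<Rightarrow> complex" where
  "rcoeff h = (qpow h 1 - qpow h (-1)) * qpow h (- 1 / 2)"

lemma qpow_rcoeff_sq: "qpow h 1 * rcoeff h ^ 2 = (qpow h 1 - qpow h (-1)) ^ 2"
proof -
  have "qpow h 1 * qpow h (- 1 / 2) * qpow h (- 1 / 2) = 1"
    by (simp add: qpow_add)
  then show ?thesis
    unfolding rcoeff_def power2_eq_square by (simp add: algebra_simps)
qed

lemma Rmat_spin_half_left_blocks:
  shows "(\<lambda>x y. Rmat h 2 n (0, x) (0, y)) = spinqH h (-1) n"
    and "(\<lambda>x y. Rmat h 2 n (1, x) (1, y)) = spinqH h 1 n"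
    and "(\<lambda>x y. Rmat h 2 n (1, x) (0, y)) = (\<lambda>_ _. 0)"
    and "(\<lambda>x y. Rmat h 2 n (0, x) (1, y)) = (\<lambda>x y. rcoeff h * spinE h n x y)"
proof -
  show "(\<lambda>x y. Rmat h 2 n (0, x) (0, y)) = spinqH h (-1) n"
    by (intro ext) (simp add: Rmat_spin_half_left spinqH_def delta_def spinF_def)
  show "(\<lambda>x y. Rmat h 2 n (1, x) (1, y)) = spinqH h 1 n"
    by (intro ext) (simp add: Rmat_spin_half_left spinqH_def delta_def spinF_def)
  show "(\<lambda>x y. Rmat h 2 n (1, x) (0, y)) = (\<lambda>_ _. 0)"
    by (intro ext) (simp add: Rmat_spin_half_left delta_def spinF_def)
  show "(\<lambda>x y. Rmat h 2 n (0, x) (1, y)) = (\<lambda>x y. rcoeff h * spinE h n x y)"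
  proof (intro ext)
    fix x y
    have q_exponent: "qpow h (-1) * qpow h (wt 2 1 - wt n y) * qpow h (2 * wt 2 1 * wt n y)
        = qpow h (- 1 / 2)"
      by (simp add: qpow_add)
    have "Rmat h 2 n (0, x) (1, y) =
        ((qpow h 1 - qpow h (-1)) / qnum h 1 * qnum h 1) * spinE h n x y
        * (qpow h (-1) * qpow h (wt 2 1 - wt n y) * qpow h (2 * wt 2 1 * wt n y))"
      by (simp only: Rmat_spin_half_left spin_half_F_0_1) (simp add: delta_def mult_ac)
    also have "\<dots> = rcoeff h * spinE h n x y"
      unfolding qnum_1_cancel q_exponent rcoeff_def by (simp add: mult_ac)
    finally show "Rmat h 2 n (0, x) (1, y) = rcoeff h * spinE h n x y" .
  qed
qed

lemma Rmat_spin_half_right_blocks: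
  assumes "n \<ge> 1"
  shows "(\<lambda>x y. Rmat h n 2 (x, 0) (y, 0)) = spinqH h (-1) n"
    and "(\<lambda>x y. Rmat h n 2 (x, 1) (y, 1)) = spinqH h 1 n"
    and "(\<lambda>x y. Rmat h n 2 (x, 0) (y, 1)) = (\<lambda>_ _. 0)"
    and "(\<lambda>x y. Rmat h n 2 (x, 1) (y, 0)) = (\<lambda>x y. rcoeff h * spinF h n x y)"
proof -
  note Rmat_n_2 = Rmat_spin_half_right[OF assms]
  show "(\<lambda>x y. Rmat h n 2 (x, 0) (y, 0)) = spinqH h (-1) n"
    by (intro ext) (simp add: Rmat_n_2 spinqH_def delta_def spinE_def)
  show "(\<lambda>x y. Rmat h n 2 (x, 1) (y, 1)) = spinqH h 1 n"
    by (intro ext) (simp add: Rmat_n_2 spinqH_def delta_def spinE_def)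
  show "(\<lambda>x y. Rmat h n 2 (x, 0) (y, 1)) = (\<lambda>_ _. 0)"
    by (intro ext) (simp add: Rmat_n_2 delta_def spinE_def)
  show "(\<lambda>x y. Rmat h n 2 (x, 1) (y, 0)) = (\<lambda>x y. rcoeff h * spinF h n x y)"
  proof (intro ext)
    fix x y
    have q_exponent: "qpow h (-1) * qpow h (wt n y - wt 2 0) * qpow h (2 * wt n y * wt 2 0)
        = qpow h (- 1 / 2)"
      by (simp add: qpow_add)
    have "Rmat h n 2 (x, 1) (y, 0) =
        ((qpow h 1 - qpow h (-1)) / qnum h 1 * qnum h 1) * spinF h n x y
        * (qpow h (-1) * qpow h (wt n y - wt 2 0) * qpow h (2 * wt n y * wt 2 0))"
      by (simp only: Rmat_n_2 spin_half_E_1_0) (simp add: delta_def mult_ac)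
    also have "\<dots> = rcoeff h * spinF h n x y"
      unfolding qnum_1_cancel q_exponent rcoeff_def by (simp add: mult_ac)
    finally show "Rmat h n 2 (x, 1) (y, 0) = rcoeff h * spinF h n x y" .
  qed
qed

lemma block_R12: "block (R12 h n1 n2 n3) i k = kron (\<lambda>x y. Rmat h n1 n2 (i, x) (k, y)) delta"
  by (intro ext) (simp add: block_def R12_def kron_def split: prod.splits)

lemma block_R13: "block (R13 h n1 n2 n3) i k = kron delta (\<lambda>x y. Rmat h n1 n3 (i, x) (k, y))"
  by (intro ext) (simp add: block_def R13_def kron_def split: prod.splits)

lemma block_R21: "block (R21 h n1 n2 n3) i k = kron (\<lambda>x y. Rmat h n2 n1 (x, i) (y, k)) delta"
  by (intro ext) (simp add: block_def R21_def kron_def split: prod.splits)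

lemma block_R31: "block (R31 h n1 n2 n3) i k = kron delta (\<lambda>x y. Rmat h n3 n1 (x, i) (y, k))"
  by (intro ext) (simp add: block_def R31_def kron_def split: prod.splits)

context
  fixes h :: complex and n2 n3 :: nat
  assumes n2: "n2 \<ge> 1" and n3: "n3 \<ge> 1"
begin

lemma R21_R31_block_0_1: "block (mul3 2 n2 n3 (R21 h 2 n2 n3) (R31 h 2 n2 n3)) 0 1 = (\<lambda>_ _. 0)"
  unfolding block_mul3_spin_half block_R21 block_R31
    Rmat_spin_half_right_blocks[OF n2] Rmat_spin_half_right_blocks[OF n3]
  by simp

lemma R13_R12_block_1_0: "block (mul3 2 n2 n3 (R13 h 2 n2 n3) (R12 h 2 n2 n3)) 1 0 = (\<lambda>_ _. 0)"
  unfolding block_mul3_spin_half block_R13 block_R12 Rmat_spin_half_left_blocks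
  by simp

lemma R21_R31_blocks:
  assumes "x \<in> {..<n2} \<times> {..<n3}" "y \<in> {..<n2} \<times> {..<n3}"
  shows "block (mul3 2 n2 n3 (R21 h 2 n2 n3) (R31 h 2 n2 n3)) 0 0 x y = DeltaqH h (-1) n2 n3 x y"
    and "block (mul3 2 n2 n3 (R21 h 2 n2 n3) (R31 h 2 n2 n3)) 1 1 x y = DeltaqH h 1 n2 n3 x y"
    and "block (mul3 2 n2 n3 (R21 h 2 n2 n3) (R31 h 2 n2 n3)) 1 0 x y = rcoeff h * DeltaF h n2 n3 x y"
  unfolding block_mul3_spin_half block_R21 block_R31
    Rmat_spin_half_right_blocks[OF n2] Rmat_spin_half_right_blocks[OF n3] mul2_kron_delta[OF assms]
  by (simp_all add: DeltaqH_def DeltaF_def kron_def algebra_simps)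

lemma R13_R12_blocks:
  assumes "x \<in> {..<n2} \<times> {..<n3}" "y \<in> {..<n2} \<times> {..<n3}"
  shows "block (mul3 2 n2 n3 (R13 h 2 n2 n3) (R12 h 2 n2 n3)) 0 0 x y = DeltaqH h (-1) n2 n3 x y"
    and "block (mul3 2 n2 n3 (R13 h 2 n2 n3) (R12 h 2 n2 n3)) 1 1 x y = DeltaqH h 1 n2 n3 x y"
    and "block (mul3 2 n2 n3 (R13 h 2 n2 n3) (R12 h 2 n2 n3)) 0 1 x y = rcoeff h * DeltaE h n2 n3 x y"
  unfolding block_mul3_spin_half block_R13 block_R12 Rmat_spin_half_left_blocks
    mul2_kron_delta[OF assms]
  by (simp_all add: DeltaqH_def DeltaE_def kron_def algebra_simps)


lemma ptrace1_R21_R31_R13_R12_mu1: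
  assumes x: "x \<in> {..<n2} \<times> {..<n3}" and y: "y \<in> {..<n2} \<times> {..<n3}"
  shows "ptrace1 2 (mul3 2 n2 n3
      (mul3 2 n2 n3 (mul3 2 n2 n3 (R21 h 2 n2 n3) (R31 h 2 n2 n3))
                    (mul3 2 n2 n3 (R13 h 2 n2 n3) (R12 h 2 n2 n3)))
      (mu1 h 2 n2 n3)) x y = DeltaQ h n2 n3 x y" (is "?trace = _")
proof -
  have "?trace =
        qpow h (-1) * mul2 n2 n3 (DeltaqH h (-1) n2 n3) (DeltaqH h (-1) n2 n3) x y
      + qpow h 1 * (mul2 n2 n3 (\<lambda>u v. rcoeff h * DeltaF h n2 n3 u v)
                      (\<lambda>u v. rcoeff h * DeltaE h n2 n3 u v) x y
                    + mul2 n2 n3 (DeltaqH h 1 n2 n3) (DeltaqH h 1 n2 n3) x y)"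
    unfolding ptrace1_lower_upper_mu1[OF R21_R31_block_0_1 R13_R12_block_1_0 y]
    using mul2_cong[OF R21_R31_blocks(1) R13_R12_blocks(1) x y]
      mul2_cong[OF R21_R31_blocks(2) R13_R12_blocks(2) x y]
      mul2_cong[OF R21_R31_blocks(3) R13_R12_blocks(3) x y]
    by simp
  also have "\<dots> =
      qpow h (-1) * mul2 n2 n3 (DeltaqH h (-1) n2 n3) (DeltaqH h (-1) n2 n3) x y
    + (qpow h 1 * rcoeff h ^ 2) * mul2 n2 n3 (DeltaF h n2 n3) (DeltaE h n2 n3) x y
    + qpow h 1 * mul2 n2 n3 (DeltaqH h 1 n2 n3) (DeltaqH h 1 n2 n3) x y"
    by (simp add: mul2_scale power2_eq_square algebra_simps)
  also have "\<dots> = DeltaQ h n2 n3 x y"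
    unfolding qpow_rcoeff_sq DeltaQ_def by (simp add: algebra_simps)
  finally show ?thesis .
qed

end

theorem corollary5p5:
  fixes h :: complex and n2 n3 :: nat
  assumes generic: "\<forall>k::nat. k > 0 \<longrightarrow> exp h ^ k \<noteq> 1"
    and "n2 \<ge> 1" and "n3 \<ge> 1"
  shows "\<forall>x\<in>{..<n2} \<times> {..<n3}. \<forall>y\<in>{..<n2} \<times> {..<n3}.
    ptrace1 2
      (mul3 2 n2 n3
        (mul3 2 n2 n3
          (mul3 2 n2 n3
            (mul3 2 n2 n3 (R21 h 2 n2 n3) (R31 h 2 n2 n3))
            (R13 h 2 n2 n3))
          (R12 h 2 n2 n3))
        (mu1 h 2 n2 n3)) x y
    = DeltaQ h n2 n3 x y"
proof -
  show ?thesis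
    using ptrace1_R21_R31_R13_R12_mu1[OF assms(2,3)] unfolding mul3_assoc by blast
qed

end
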